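(* Let $\preceq$ be a balanced convex preorder on $\Phi_+$, and let $\rho$ be a non-simple real positive root. Then there exists a real minimal pair for $\rho$ (i.e. a minimal pair $(\beta,\gamma)$ for $\rho$ with both $\beta,\gamma$ real roots), unless $\rho$ is of the form $n\delta\pm\alpha_i$ with $n\in\mathbb Z_{>0}$ and $i\in I'$.
   Context: $\mathbf C$ is a Cartan matrix of untwisted affine type on $I=\{0,\dots,l\}$, $0$ the affine vertex, $I'=I\setminus\{0\}$; simple roots $\alpha_i$, null root $\delta$, $\Phi'_+$ positive roots of the finite root system on $I'$, real positive roots $\Phi_+^{\mathrm{re}}=\{\beta+n\delta\mid\beta\in\Phi'_+,n\ge0\}\sqcup\{-\beta+n\delta\mid\beta\in\Phi'_+,n>0\}$, $\Phi_+=\Phi_+^{\mathrm{re}}\sqcup\{n\delta\mid n>0\}$. A convex preorder is a preorder $\preceq$ on $\Phi_+$ such that $\beta\preceq\gamma$ or $\gamma\preceq\beta$; $\beta\preceq\gamma$ and $\beta+\gamma\in\Phi_+$ imply $\beta\preceq\beta+\gamma\preceq\gamma$; $\beta\preceq\gamma\preceq\beta$ iff $\beta,\gamma$ are proportional. $\beta\prec\gamma$ means $\beta\preceq\gamma$ and $\gamma\not\preceq\beta$. It is balanced if $\{\rho\in\Phi_+^{\mathrm{re}}\mid\rho\succ\delta\}=\{\beta+n\delta\mid\beta\in\Phi'_+,n\ge0\}$. A pair $(\beta,\gamma)$ of positive roots is a minimal pair for $\rho\in\Phi_+^{\mathrm{re}}$ if (i) $\beta+\gamma=\rho$ and $\beta\succ\gamma$,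 and (ii) for any other pair $(\beta',\gamma')$ of positive roots satisfying (i), $\beta'\succ\beta$ or $\gamma'\prec\gamma$. *)

theory Defs
  imports "HOL-Analysis.Analysis"
begin

definition refl_vec :: "'a::euclidean_space \<Rightarrow> 'a \<Rightarrow> 'a" where
  "refl_vec \<alpha> x = x - ((2 * (x \<bullet> \<alpha>)) / (\<alpha> \<bullet> \<alpha>)) *\<^sub>R \<alpha>"

definition root_system :: "'a::euclidean_space set \<Rightarrow> bool" where
  "root_system R \<longleftrightarrow> finite R \<and> 0 \<notin> R \<and> span R = UNIV
     \<and> (\<forall>\<alpha>\<in>R. refl_vec \<alpha> ` R = R)
     \<and> (\<forall>\<alpha>\<in>R. \<forall>\<beta>\<in>R. (2 * (\<beta> \<bullet> \<alpha>)) / (\<alpha> \<bullet> \<alpha>) \<in> \<int>)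
     \<and> (\<forall>\<alpha>\<in>R. \<forall>c::real. c *\<^sub>R \<alpha> \<in> R \<longrightarrow> c = 1 \<or> c = -1)"

definition irreducible_rs :: "'a::euclidean_space set \<Rightarrow> bool" where
  "irreducible_rs R \<longleftrightarrow> \<not> (\<exists>R1 R2. R1 \<noteq> {} \<and> R2 \<noteq> {} \<and> R1 \<union> R2 = R \<and> R1 \<inter> R2 = {}
       \<and> (\<forall>a\<in>R1. \<forall>b\<in>R2. a \<bullet> b = 0))"

definition nonneg_int_comb :: "'a::euclidean_space set \<Rightarrow> 'a \<Rightarrow> bool" where
  "nonneg_int_comb S v \<longleftrightarrow> (\<exists>c. (\<forall>a\<in>S. c a \<in> \<int> \<and> c a \<ge> 0) \<and> v = (\<Sum>a\<in>S. c a *\<^sub>R a))"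

definition is_base :: "'a::euclidean_space set \<Rightarrow> 'a set \<Rightarrow> bool" where
  "is_base R S \<longleftrightarrow> S \<subseteq> R \<and> independent S
     \<and> (\<forall>\<beta>\<in>R. nonneg_int_comb S \<beta> \<or> nonneg_int_comb S (- \<beta>))"

definition pos_roots :: "'a::euclidean_space set \<Rightarrow> 'a set \<Rightarrow> 'a set" where
  "pos_roots R S = {\<beta>\<in>R. nonneg_int_comb S \<beta>}"

definition highest_root :: "'a::euclidean_space set \<Rightarrow> 'a set \<Rightarrow> 'a" where
  "highest_root R S = (THE \<theta>. \<theta> \<in> pos_roots R S \<and> (\<forall>a\<in>S. \<theta> + a \<notin> R))"

text \<open>An affine root \<beta> + n\<delta> is encoded as the pair (\<beta>, n); \<delta> = (0, 1).\<close>

definition aff_add :: "'a::euclidean_space \<times> int \<Rightarrow> 'a \<times> int \<Rightarrow> 'a \<times> int" where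
  "aff_add x y = (fst x + fst y, snd x + snd y)"

definition null_root :: "'a::euclidean_space \<times> int" where
  "null_root = (0, 1)"

definition real_pos_roots :: "'a::euclidean_space set \<Rightarrow> 'a set \<Rightarrow> ('a \<times> int) set" where
  "real_pos_roots R S =
     {(\<beta>, n) | \<beta> n. \<beta> \<in> pos_roots R S \<and> n \<ge> 0} \<union> {(- \<beta>, n) | \<beta> n. \<beta> \<in> pos_roots R S \<and> n > 0}"

definition aff_pos_roots :: "'a::euclidean_space set \<Rightarrow> 'a set \<Rightarrow> ('a \<times> int) set" where
  "aff_pos_roots R S = real_pos_roots R S \<union> {(0, n) | n. n > 0}"

text \<open>Simple affine roots: \<alpha>_i (i \<in> I') and \<alpha>_0 = \<delta> - \<theta>.\<close>
definition aff_simple_roots :: "'a::euclidean_space set \<Rightarrow> 'a set \<Rightarrow> ('a \<times> int) set" where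
  "aff_simple_roots R S = {(a, 0) | a. a \<in> S} \<union> {(- highest_root R S, 1)}"

definition proportional :: "'a::euclidean_space \<times> int \<Rightarrow> 'a \<times> int \<Rightarrow> bool" where
  "proportional x y \<longleftrightarrow> (\<exists>c::real. c \<noteq> 0 \<and> fst y = c *\<^sub>R fst x \<and> real_of_int (snd y) = c * real_of_int (snd x))"

definition convex_preorder ::
  "'a::euclidean_space set \<Rightarrow> 'a set \<Rightarrow> ('a \<times> int \<Rightarrow> 'a \<times> int \<Rightarrow> bool) \<Rightarrow> bool" where
  "convex_preorder R S le \<longleftrightarrow>
     (let P = aff_pos_roots R S in
       (\<forall>x\<in>P. le x x)
     \<and> (\<forall>x\<in>P. \<forall>y\<in>P. \<forall>z\<in>P. le x y \<longrightarrow> le y z \<longrightarrow> le x z)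
     \<and> (\<forall>x\<in>P. \<forall>y\<in>P. le x y \<or> le y x)
     \<and> (\<forall>x\<in>P. \<forall>y\<in>P. le x y \<longrightarrow> aff_add x y \<in> P \<longrightarrow> le x (aff_add x y) \<and> le (aff_add x y) y)
     \<and> (\<forall>x\<in>P. \<forall>y\<in>P. (le x y \<and> le y x) \<longleftrightarrow> proportional x y))"

definition strictly :: "('b \<Rightarrow> 'b \<Rightarrow> bool) \<Rightarrow> 'b \<Rightarrow> 'b \<Rightarrow> bool" where
  "strictly le x y \<longleftrightarrow> le x y \<and> \<not> le y x"

definition balanced ::
  "'a::euclidean_space set \<Rightarrow> 'a set \<Rightarrow> ('a \<times> int \<Rightarrow> 'a \<times> int \<Rightarrow> bool) \<Rightarrow> bool" where
  "balanced R S le \<longleftrightarrow>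
     {\<rho> \<in> real_pos_roots R S. strictly le null_root \<rho>} = {(\<beta>, n) | \<beta> n. \<beta> \<in> pos_roots R S \<and> n \<ge> 0}"

definition split_pair ::
  "'a::euclidean_space set \<Rightarrow> 'a set \<Rightarrow> ('a \<times> int \<Rightarrow> 'a \<times> int \<Rightarrow> bool) \<Rightarrow> 'a \<times> int \<Rightarrow> 'a \<times> int \<Rightarrow> 'a \<times> int \<Rightarrow> bool" where
  "split_pair R S le \<rho> \<beta> \<gamma> \<longleftrightarrow> \<beta> \<in> aff_pos_roots R S \<and> \<gamma> \<in> aff_pos_roots R S
     \<and> aff_add \<beta> \<gamma> = \<rho> \<and> strictly le \<gamma> \<beta>"

definition minimal_pair ::
  "'a::euclidean_space set \<Rightarrow> 'a set \<Rightarrow> ('a \<times> int \<Rightarrow> 'a \<times> int \<Rightarrow> bool) \<Rightarrow> 'a \<times> int \<Rightarrow> 'a \<times> int \<Rightarrow> 'a \<times> int \<Rightarrow> bool" where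
  "minimal_pair R S le \<rho> \<beta> \<gamma> \<longleftrightarrow> split_pair R S le \<rho> \<beta> \<gamma>
     \<and> (\<forall>\<beta>' \<gamma>'. split_pair R S le \<rho> \<beta>' \<gamma>' \<and> (\<beta>', \<gamma>') \<noteq> (\<beta>, \<gamma>)
            \<longrightarrow> strictly le \<beta> \<beta>' \<or> strictly le \<gamma>' \<gamma>)"

end

theory Submission
  imports Defs
begin

text \<open>For \<open>\<rho> = \<alpha> + n\<delta>\<close> with \<open>\<alpha>\<close> not simple, pick a simple root \<open>a\<close> with \<open>\<alpha> - a\<close> positive.
  Then \<open>\<rho> = (\<alpha> - a + n\<delta>) + a\<close> is a sum of two non-proportional real roots, both above \<open>\<delta>\<close>
  by balancedness, and convexity orders them into a split pair. Among the finitely many split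
  pairs of \<open>\<rho>\<close>, one with the smaller root maximal and then the larger root minimal is a
  minimal pair; its smaller root dominates that of the initial pair, so both its roots lie above
  \<open>\<delta>\<close> and are real. For \<open>\<rho> = -\<alpha> + n\<delta>\<close> with \<open>n \<ge> 2\<close> the mirror argument works below \<open>\<delta>\<close>.
  For \<open>\<rho> = -\<alpha> + \<delta>\<close> the root \<open>\<alpha>\<close> is not the highest root, which in an irreducible root system
  is the only positive root that cannot be raised by a simple root; so \<open>\<alpha> + a\<close> is a root for
  some simple \<open>a\<close>, which yields a split pair. Every split pair of \<open>-\<alpha> + \<delta>\<close> is real, since an
  imaginary summand would leave \<open>-\<alpha> + 0\<delta>\<close>, which is not a positive root.\<close>

lemma Ints_ge_1: "(x::real) \<in> \<int> \<Longrightarrow> 0 < x \<Longrightarrow> 1 \<le> x"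
  by (elim Ints_cases) simp

lemma inner_eq_0_if_orthogonal_spans:
  assumes "\<forall>x\<in>J. \<forall>y\<in>K. x \<bullet> y = 0" and "u \<in> span J" and "v \<in> span K"
  shows "u \<bullet> v = 0"
proof -
  have "orthogonal x v" if "x \<in> J" for x
    using orthogonal_to_span[OF assms(3)] assms(1) that by (simp add: orthogonal_def)
  then have "orthogonal v u"
    using orthogonal_to_span[OF assms(2)] orthogonal_commute by blast
  then show ?thesis by (simp add: orthogonal_def inner_commute)
qed

lemma refl_vec_self: "\<alpha> \<noteq> 0 \<Longrightarrow> refl_vec \<alpha> \<alpha> = - \<alpha>"
  unfolding refl_vec_def by (simp add: scaleR_2 algebra_simps)

lemma refl_vec_orthogonal_add: "\<beta> \<bullet> \<alpha> = 0 \<Longrightarrow> \<alpha> \<noteq> 0 \<Longrightarrow> refl_vec \<alpha> (\<beta> + \<alpha>) = \<beta> - \<alpha>"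
  unfolding refl_vec_def by (simp add: inner_add_left scaleR_2 algebra_simps)

lemma finite_total_preorder_has_max:
  assumes "finite A" "A \<noteq> {}"
    and total: "\<forall>x\<in>A. \<forall>y\<in>A. r x y \<or> r y x"
    and trans: "\<forall>x\<in>A. \<forall>y\<in>A. \<forall>z\<in>A. r x y \<longrightarrow> r y z \<longrightarrow> r x z"
  shows "\<exists>m\<in>A. \<forall>x\<in>A. r x m"
  using assms
proof (induction A rule: finite_ne_induct)
  case (insert x A)
  then obtain m where m: "m \<in> A" "\<forall>y\<in>A. r y m" by blast
  show ?case
  proof (cases "r x m")
    case True
    then show ?thesis using m by blast
  next
    case False
    then have "r m x" using insert.prems(1) m(1) by blast
    then have "\<forall>y\<in>A. r y x" using m insert.prems(2) by blast
    moreover have "r x x" using insert.prems(1) by blast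
    ultimately show ?thesis by blast
  qed
qed blast

lemma finite_lex_max_min:
  assumes "finite A" "A \<noteq> {}" and fg: "f ` A \<subseteq> B" "g ` A \<subseteq> B"
    and total: "\<And>x y. x \<in> B \<Longrightarrow> y \<in> B \<Longrightarrow> r x y \<or> r y x"
    and trans: "\<And>x y z. x \<in> B \<Longrightarrow> y \<in> B \<Longrightarrow> z \<in> B \<Longrightarrow> r x y \<Longrightarrow> r y z \<Longrightarrow> r x z"
  shows "\<exists>m\<in>A. (\<forall>x\<in>A. r (f x) (f m)) \<and> (\<forall>x\<in>A. r (f m) (f x) \<longrightarrow> r (g m) (g x))"
proof -
  have fB: "f x \<in> B" and gB: "g x \<in> B" if "x \<in> A" for x using fg that by auto
  have "\<exists>m\<in>A. \<forall>x\<in>A. r (f x) (f m)"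
    by (rule finite_total_preorder_has_max[OF assms(1,2)]) (use total trans fB in blast)+
  then obtain m1 where m1: "m1 \<in> A" "\<forall>x\<in>A. r (f x) (f m1)" by blast
  define T where "T = {x\<in>A. r (f m1) (f x)}"
  have TA: "T \<subseteq> A" by (auto simp: T_def)
  have "m1 \<in> T" using m1 by (simp add: T_def)
  then have "\<exists>m\<in>T. \<forall>x\<in>T. r (g m) (g x)"
    using TA finite_subset[OF TA assms(1)]
    by (intro finite_total_preorder_has_max[of T "\<lambda>x y. r (g y) (g x)"])
      (use total trans gB in blast)+
  then obtain m where m: "m \<in> T" "\<forall>x\<in>T. r (g m) (g x)" by blast
  have mA: "m \<in> A" and m1m: "r (f m1) (f m)" using m(1) by (auto simp: T_def)
  have "r (f x) (f m)" if "x \<in> A" for x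
    using trans[OF fB fB fB, OF that m1(1) mA] m1(2) that m1m by blast
  moreover have "r (g m) (g x)" if "x \<in> A" "r (f m) (f x)" for x
  proof -
    have "r (f m1) (f x)" using trans[OF fB fB fB, OF m1(1) mA that(1) m1m that(2)] .
    then show ?thesis using m(2) that(1) by (simp add: T_def)
  qed
  ultimately show ?thesis using mA by blast
qed

section \<open>Root systems with a base\<close>

locale based_root_system =
  fixes R S :: "'a::euclidean_space set"
  assumes root_system: "root_system R" and base: "is_base R S"
begin

lemma finite_roots: "finite R"
  and zero_not_root: "0 \<notin> R"
  and span_roots: "span R = UNIV"
  and cartan_integer: "\<alpha> \<in> R \<Longrightarrow> \<beta> \<in> R \<Longrightarrow> 2 * (\<beta> \<bullet> \<alpha>) / (\<alpha> \<bullet> \<alpha>) \<in> \<int>"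
  and root_multiple: "\<alpha> \<in> R \<Longrightarrow> c *\<^sub>R \<alpha> \<in> R \<Longrightarrow> c = 1 \<or> c = -1"
  using root_system unfolding root_system_def by blast+

lemma refl_vec_root: "\<alpha> \<in> R \<Longrightarrow> \<beta> \<in> R \<Longrightarrow> refl_vec \<alpha> \<beta> \<in> R"
  using root_system unfolding root_system_def by blast

lemma simple_roots_subset: "S \<subseteq> R"
  and independent_simple_roots: "independent S"
  and root_nonneg_int_comb: "\<beta> \<in> R \<Longrightarrow> nonneg_int_comb S \<beta> \<or> nonneg_int_comb S (- \<beta>)"
  using base unfolding is_base_def by blast+

lemma finite_simple_roots: "finite S"
  by (rule finite_subset[OF simple_roots_subset finite_roots])

lemma root_uminus:
  assumes "\<alpha> \<in> R" shows "- \<alpha> \<in> R"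
proof -
  have "\<alpha> \<noteq> 0" using assms zero_not_root by blast
  then show ?thesis using refl_vec_root[OF assms assms] by (simp add: refl_vec_self)
qed

lemma nonneg_int_comb_in_span: "nonneg_int_comb S v \<Longrightarrow> v \<in> span S"
proof -
  assume "nonneg_int_comb S v"
  then obtain c where "v = (\<Sum>a\<in>S. c a *\<^sub>R a)" unfolding nonneg_int_comb_def by blast
  then show ?thesis by (simp add: span_sum span_scale span_base)
qed

lemma span_simple_roots: "span S = UNIV"
proof -
  have "\<beta> \<in> span S" if "\<beta> \<in> R" for \<beta>
    using root_nonneg_int_comb[OF that] nonneg_int_comb_in_span span_neg[of "- \<beta>" S] by auto
  then have "R \<subseteq> span S" by blast
  then show ?thesis
    using span_roots span_minimal[of R "span S"] by auto
qed

definition coord :: "'a \<Rightarrow> 'a \<Rightarrow> real" where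
  "coord v = representation S v"

lemma in_span_simple_roots: "v \<in> span S"
  using span_simple_roots by auto

lemma coord_add: "coord (u + v) b = coord u b + coord v b"
  unfolding coord_def
  using representation_add[OF independent_simple_roots in_span_simple_roots in_span_simple_roots]
  by simp

lemma coord_uminus: "coord (- v) b = - coord v b"
  unfolding coord_def
  using representation_neg[OF independent_simple_roots in_span_simple_roots] by simp

lemma coord_diff: "coord (u - v) b = coord u b - coord v b"
  unfolding coord_def
  using representation_diff[OF independent_simple_roots in_span_simple_roots in_span_simple_roots]
  by simp

lemma coord_scaleR: "coord (r *\<^sub>R v) b = r * coord v b"
  unfolding coord_def
  using representation_scale[OF independent_simple_roots in_span_simple_roots] by simp

lemma coord_simple: "a \<in> S \<Longrightarrow> coord a b = (if b = a then 1 else 0)"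
  unfolding coord_def using representation_basis[OF independent_simple_roots] by simp

lemma coord_outside: "b \<notin> S \<Longrightarrow> coord v b = 0"
  unfolding coord_def using representation_ne_zero by blast

lemma sum_coord: "(\<Sum>a\<in>S. coord v a *\<^sub>R a) = v"
  unfolding coord_def
  using sum_representation_eq[OF independent_simple_roots in_span_simple_roots finite_simple_roots]
  by simp

lemma coord_inject:
  assumes "\<And>a. a \<in> S \<Longrightarrow> coord u a = coord v a" shows "u = v"
proof -
  have "(\<Sum>a\<in>S. coord u a *\<^sub>R a) = (\<Sum>a\<in>S. coord v a *\<^sub>R a)"
    using assms by (intro sum.cong) auto
  then show ?thesis by (simp add: sum_coord)
qed

lemma zero_if_coord_zero: "(\<And>a. a \<in> S \<Longrightarrow> coord v a = 0) \<Longrightarrow> v = 0"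
  using coord_inject[of v 0] coord_scaleR[of 0] by simp

lemma coord_sum: "b \<in> S \<Longrightarrow> coord (\<Sum>a\<in>S. c a *\<^sub>R a) b = c b"
proof -
  assume b: "b \<in> S"
  have "coord (\<Sum>a\<in>S. c a *\<^sub>R a) b = (\<Sum>a\<in>S. coord (c a *\<^sub>R a) b)"
    unfolding coord_def
    using representation_sum[OF independent_simple_roots, of S "\<lambda>a. c a *\<^sub>R a"] in_span_simple_roots
    by simp
  also have "\<dots> = (\<Sum>a\<in>S. c a * (if b = a then 1 else 0))"
    by (intro sum.cong) (auto simp: coord_scaleR coord_simple)
  also have "\<dots> = c b"
    using b finite_simple_roots by (simp add: if_distrib cong: if_cong)
  finally show ?thesis .
qed

lemma nonneg_int_comb_iff: "nonneg_int_comb S v \<longleftrightarrow> (\<forall>a\<in>S. coord v a \<in> \<int> \<and> 0 \<le> coord v a)"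
proof
  assume "nonneg_int_comb S v"
  then obtain c where "\<forall>a\<in>S. c a \<in> \<int> \<and> 0 \<le> c a" "v = (\<Sum>a\<in>S. c a *\<^sub>R a)"
    unfolding nonneg_int_comb_def by blast
  then show "\<forall>a\<in>S. coord v a \<in> \<int> \<and> 0 \<le> coord v a" by (simp add: coord_sum)
next
  assume "\<forall>a\<in>S. coord v a \<in> \<int> \<and> 0 \<le> coord v a"
  then show "nonneg_int_comb S v"
    unfolding nonneg_int_comb_def by (intro exI[of _ "coord v"]) (simp add: sum_coord)
qed

lemma root_coord_Ints:
  assumes "\<beta> \<in> R" shows "coord \<beta> a \<in> \<int>"
proof (cases "a \<in> S")
  case True
  then have "coord \<beta> a \<in> \<int> \<or> - coord \<beta> a \<in> \<int>"
    using root_nonneg_int_comb[OF assms] by (auto simp: nonneg_int_comb_iff coord_uminus)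
  then show ?thesis using Ints_minus by fastforce
qed (simp add: coord_outside)

lemma root_coord_sign: "\<beta> \<in> R \<Longrightarrow> (\<forall>a\<in>S. 0 \<le> coord \<beta> a) \<or> (\<forall>a\<in>S. coord \<beta> a \<le> 0)"
  using root_nonneg_int_comb[of \<beta>] by (auto simp: nonneg_int_comb_iff coord_uminus)

lemma pos_roots_iff: "\<beta> \<in> pos_roots R S \<longleftrightarrow> \<beta> \<in> R \<and> (\<forall>a\<in>S. 0 \<le> coord \<beta> a)"
  unfolding pos_roots_def using nonneg_int_comb_iff root_coord_Ints by auto

lemma pos_root_root: "\<beta> \<in> pos_roots R S \<Longrightarrow> \<beta> \<in> R"
  by (simp add: pos_roots_iff)

lemma pos_root_nonzero: "\<beta> \<in> pos_roots R S \<Longrightarrow> \<beta> \<noteq> 0"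
  using pos_root_root zero_not_root by blast

lemma pos_root_uminus:
  assumes "\<beta> \<in> pos_roots R S" shows "- \<beta> \<notin> pos_roots R S"
proof
  assume "- \<beta> \<in> pos_roots R S"
  then have "coord \<beta> a = 0" if "a \<in> S" for a
    using assms that by (auto simp: pos_roots_iff coord_uminus intro: order.antisym)
  then show False using zero_if_coord_zero pos_root_nonzero[OF assms] by blast
qed

lemma root_pos_or_neg: "\<beta> \<in> R \<Longrightarrow> \<beta> \<in> pos_roots R S \<or> - \<beta> \<in> pos_roots R S"
  using root_coord_sign[of \<beta>] root_uminus by (auto simp: pos_roots_iff coord_uminus)

lemma simple_pos_root: "a \<in> S \<Longrightarrow> a \<in> pos_roots R S"
  using simple_roots_subset by (auto simp: pos_roots_iff coord_simple)

lemma inner_square_less: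
  assumes \<alpha>: "\<alpha> \<in> R" and \<beta>: "\<beta> \<in> R" and "\<beta> \<noteq> \<alpha>" and "\<beta> \<noteq> - \<alpha>"
  shows "(\<beta> \<bullet> \<alpha>)\<^sup>2 < (\<alpha> \<bullet> \<alpha>) * (\<beta> \<bullet> \<beta>)"
proof -
  have nz: "norm \<alpha> \<noteq> 0" using \<alpha> zero_not_root by auto
  have "\<bar>\<alpha> \<bullet> \<beta>\<bar> \<noteq> norm \<alpha> * norm \<beta>"
  proof
    assume "\<bar>\<alpha> \<bullet> \<beta>\<bar> = norm \<alpha> * norm \<beta>"
    then have "norm \<alpha> *\<^sub>R \<beta> = norm \<beta> *\<^sub>R \<alpha> \<or> norm \<alpha> *\<^sub>R \<beta> = - norm \<beta> *\<^sub>R \<alpha>"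
      by (simp add: norm_cauchy_schwarz_abs_eq)
    then have "(1 / norm \<alpha>) *\<^sub>R (norm \<alpha> *\<^sub>R \<beta>) = (1 / norm \<alpha>) *\<^sub>R (norm \<beta> *\<^sub>R \<alpha>)
      \<or> (1 / norm \<alpha>) *\<^sub>R (norm \<alpha> *\<^sub>R \<beta>) = (1 / norm \<alpha>) *\<^sub>R (- norm \<beta> *\<^sub>R \<alpha>)"
      by metis
    then have "\<beta> = (norm \<beta> / norm \<alpha>) *\<^sub>R \<alpha> \<or> \<beta> = (- (norm \<beta> / norm \<alpha>)) *\<^sub>R \<alpha>"
      using nz by simp
    then obtain c where c: "\<beta> = c *\<^sub>R \<alpha>" by blast
    then have "c = 1 \<or> c = -1" using root_multiple[OF \<alpha>] \<beta> by simp
    then show False using c assms(3,4) by auto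
  qed
  then have "\<bar>\<beta> \<bullet> \<alpha>\<bar> < norm \<alpha> * norm \<beta>"
    using Cauchy_Schwarz_ineq2[of \<alpha> \<beta>] by (simp add: inner_commute)
  then have "\<bar>\<beta> \<bullet> \<alpha>\<bar>\<^sup>2 < (norm \<alpha> * norm \<beta>)\<^sup>2"
    by (intro power_strict_mono) auto
  then show ?thesis
    by (simp add: power_mult_distrib power2_norm_eq_inner)
qed

text \<open>The two Cartan integers are positive with product less than 4, so one of them is 1 and the
  corresponding reflection yields the difference.\<close>

lemma root_diff_if_inner_pos:
  assumes \<alpha>: "\<alpha> \<in> R" and \<beta>: "\<beta> \<in> R" and "\<beta> \<noteq> \<alpha>" and "\<beta> \<noteq> - \<alpha>" and pos: "0 < \<beta> \<bullet> \<alpha>"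
  shows "\<beta> - \<alpha> \<in> R"
proof -
  have na: "0 < \<alpha> \<bullet> \<alpha>" and nb: "0 < \<beta> \<bullet> \<beta>" using \<alpha> \<beta> zero_not_root by auto
  obtain p :: int where p: "2 * (\<beta> \<bullet> \<alpha>) / (\<alpha> \<bullet> \<alpha>) = p"
    using cartan_integer[OF \<alpha> \<beta>] by (auto elim: Ints_cases)
  obtain q :: int where q: "2 * (\<alpha> \<bullet> \<beta>) / (\<beta> \<bullet> \<beta>) = q"
    using cartan_integer[OF \<beta> \<alpha>] by (auto elim: Ints_cases)
  have "0 < real_of_int p" unfolding p[symmetric] using pos na by simp
  moreover have "0 < real_of_int q" unfolding q[symmetric] using pos nb by (simp add: inner_commute)
  ultimately have "0 < p" "0 < q" by simp_all
  have "real_of_int (p * q) = 4 * (\<beta> \<bullet> \<alpha>)\<^sup>2 / ((\<alpha> \<bullet> \<alpha>) * (\<beta> \<bullet> \<beta>))"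
    unfolding of_int_mult p[symmetric] q[symmetric]
    by (simp add: inner_commute power2_eq_square times_divide_times_eq)
  also have "\<dots> < 4"
    using inner_square_less[OF assms(1-4)] na nb by (simp add: divide_less_eq)
  finally have "p * q < 4" by linarith
  have "p = 1 \<or> q = 1"
  proof (rule ccontr)
    assume "\<not> (p = 1 \<or> q = 1)"
    then have "2 * 2 \<le> p * q" using \<open>0 < p\<close> \<open>0 < q\<close> by (intro mult_mono) auto
    then show False using \<open>p * q < 4\<close> by simp
  qed
  then show ?thesis
  proof
    assume "p = 1"
    then have "refl_vec \<alpha> \<beta> = \<beta> - \<alpha>" using p pos by (simp add: refl_vec_def)
    then show ?thesis using refl_vec_root[OF \<alpha> \<beta>] by simp
  next
    assume "q = 1"
    then have "refl_vec \<beta> \<alpha> = \<alpha> - \<beta>" using q pos by (simp add: refl_vec_def inner_commute)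
    then show ?thesis using root_uminus[OF refl_vec_root[OF \<beta> \<alpha>]] by simp
  qed
qed

lemma inner_coord_expansion: "v \<bullet> w = (\<Sum>a\<in>S. coord w a * (v \<bullet> a))"
  by (subst sum_coord[of w, symmetric]) (simp add: inner_sum_right)

lemma exists_simple_inner_pos:
  assumes "v \<noteq> 0" and nonneg: "\<forall>a\<in>S. 0 \<le> coord v a"
  shows "\<exists>a\<in>S. 0 < coord v a \<and> 0 < v \<bullet> a"
proof (rule ccontr)
  assume none: "\<not> ?thesis"
  have "coord v a * (v \<bullet> a) \<le> 0" if "a \<in> S" for a
  proof (cases "0 < coord v a")
    case True
    then have "v \<bullet> a \<le> 0" using none that by auto
    then show ?thesis using True by (simp add: mult_nonneg_nonpos)
  next
    case False
    then have "coord v a = 0" using nonneg that by force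
    then show ?thesis by simp
  qed
  then have "v \<bullet> v \<le> 0"
    unfolding inner_coord_expansion[of v v] by (rule sum_nonpos)
  then show False using assms(1) inner_gt_zero_iff[of v] by linarith
qed

lemma simple_inner_nonpos:
  assumes a: "a \<in> S" and b: "b \<in> S" and "a \<noteq> b"
  shows "a \<bullet> b \<le> 0"
proof (rule ccontr)
  assume "\<not> a \<bullet> b \<le> 0"
  have coords: "coord (a - b) a = 1" "coord (a - b) b = -1"
    using a b \<open>a \<noteq> b\<close> by (auto simp: coord_diff coord_simple)
  have "a \<noteq> - b"
  proof
    assume "a = - b"
    then have "coord a a = - coord b a" by (simp add: coord_uminus)
    then show False using a b \<open>a \<noteq> b\<close> by (simp add: coord_simple)
  qed
  then have "a - b \<in> R"
    using root_diff_if_inner_pos[of b a] a b \<open>a \<noteq> b\<close> \<open>\<not> a \<bullet> b \<le> 0\<close> simple_roots_subset by auto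
  from root_coord_sign[OF this] have "0 \<le> coord (a - b) b \<or> coord (a - b) a \<le> 0"
    using a b by blast
  then show False using coords by simp
qed

definition height :: "'a \<Rightarrow> real" where
  "height v = (\<Sum>a\<in>S. coord v a)"

lemma height_diff_simple: "a \<in> S \<Longrightarrow> height (v - a) = height v - 1"
  unfolding height_def by (simp add: coord_diff coord_simple sum_subtractf finite_simple_roots)

lemma pos_root_height: "\<beta> \<in> pos_roots R S \<Longrightarrow> height \<beta> \<in> \<int> \<and> 0 \<le> height \<beta>"
  unfolding height_def by (auto simp: pos_roots_iff root_coord_Ints intro: Ints_sum sum_nonneg)

lemma pos_root_induct [consumes 1, case_names less]:
  assumes "\<beta> \<in> pos_roots R S"
    and step: "\<And>\<beta>. \<beta> \<in> pos_roots R S \<Longrightarrow>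
      (\<And>\<gamma>. \<gamma> \<in> pos_roots R S \<Longrightarrow> height \<gamma> < height \<beta> \<Longrightarrow> P \<gamma>) \<Longrightarrow> P \<beta>"
  shows "P \<beta>"
  using assms(1)
proof (induction "nat \<lfloor>height \<beta>\<rfloor>" arbitrary: \<beta> rule: less_induct)
  case less
  show ?case
  proof (rule step[OF less.prems])
    fix \<gamma> assume \<gamma>: "\<gamma> \<in> pos_roots R S" "height \<gamma> < height \<beta>"
    obtain k l where "height \<gamma> = of_int k" "height \<beta> = of_int l" "0 \<le> k"
      using pos_root_height[OF \<gamma>(1)] pos_root_height[OF less.prems] by (auto elim!: Ints_cases)
    then have "nat \<lfloor>height \<gamma>\<rfloor> < nat \<lfloor>height \<beta>\<rfloor>" using \<gamma>(2) by simp
    then show "P \<gamma>" using less.hyps \<gamma>(1) by blast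
  qed
qed

lemma pos_root_below_simple:
  assumes \<beta>: "\<beta> \<in> pos_roots R S" and a: "a \<in> S" and below: "\<forall>x\<in>S. coord \<beta> x \<le> coord a x"
  shows "\<beta> = a"
proof -
  have nonneg: "0 \<le> coord \<beta> x" if "x \<in> S" for x using \<beta> that by (simp add: pos_roots_iff)
  have off: "coord \<beta> x = 0" if "x \<in> S" "x \<noteq> a" for x
    using bspec[OF below that(1)] nonneg[OF that(1)] that(2) a by (simp add: coord_simple)
  have "coord \<beta> a \<noteq> 0"
  proof
    assume "coord \<beta> a = 0"
    then have "coord \<beta> x = 0" if "x \<in> S" for x using off that by (cases "x = a") auto
    then have "\<beta> = 0" by (rule zero_if_coord_zero)
    then show False using pos_root_nonzero[OF \<beta>] by simp
  qed
  then have "1 \<le> coord \<beta> a"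
    using Ints_ge_1[OF root_coord_Ints[OF pos_root_root[OF \<beta>]]] nonneg[OF a] by simp
  moreover have "coord \<beta> a \<le> 1" using bspec[OF below a] a by (simp add: coord_simple)
  ultimately have "coord \<beta> a = 1" by simp
  then show ?thesis using off a by (intro coord_inject) (auto simp: coord_simple)
qed

lemma pos_root_diff_simple:
  assumes \<alpha>: "\<alpha> \<in> pos_roots R S" and "\<alpha> \<notin> S"
  shows "\<exists>a\<in>S. \<alpha> - a \<in> pos_roots R S"
proof -
  have \<alpha>R: "\<alpha> \<in> R" and nonneg: "\<forall>x\<in>S. 0 \<le> coord \<alpha> x" using \<alpha> by (auto simp: pos_roots_iff)
  obtain a where a: "a \<in> S" and "0 < \<alpha> \<bullet> a"
    using exists_simple_inner_pos[OF pos_root_nonzero[OF \<alpha>] nonneg] by blast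
  have "\<alpha> \<noteq> - a" using \<alpha> pos_root_uminus[OF simple_pos_root[OF a]] by auto
  moreover have "\<alpha> \<noteq> a" using \<open>\<alpha> \<notin> S\<close> a by auto
  ultimately have diff: "\<alpha> - a \<in> R"
    using root_diff_if_inner_pos[OF _ \<alpha>R] a simple_roots_subset \<open>0 < \<alpha> \<bullet> a\<close> by auto
  have "\<not> (\<forall>x\<in>S. coord (\<alpha> - a) x \<le> 0)"
  proof
    assume "\<forall>x\<in>S. coord (\<alpha> - a) x \<le> 0"
    then have "\<alpha> = a" using pos_root_below_simple[OF \<alpha> a] by (simp add: coord_diff)
    then show False using \<open>\<alpha> \<noteq> a\<close> by simp
  qed
  then have "\<alpha> - a \<in> pos_roots R S"
    using root_coord_sign[OF diff] diff by (auto simp: pos_roots_iff)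
  with a show ?thesis by blast
qed

lemma pos_root_add_simple_if_inner_neg:
  assumes \<beta>: "\<beta> \<in> pos_roots R S" and a: "a \<in> S" and neg: "\<beta> \<bullet> a < 0"
  shows "\<beta> + a \<in> R"
proof -
  have "\<beta> \<noteq> - a" using \<beta> pos_root_uminus[OF simple_pos_root[OF a]] by auto
  moreover have "\<beta> \<noteq> a"
  proof
    assume "\<beta> = a"
    then show False using neg by (metis inner_ge_zero not_le)
  qed
  ultimately have "\<beta> - (- a) \<in> R"
    using root_diff_if_inner_pos[OF root_uminus pos_root_root[OF \<beta>]] a simple_roots_subset neg
    by auto
  then show ?thesis by simp
qed

lemma maximal_root_dominant:
  assumes "\<theta> \<in> pos_roots R S" and "\<forall>a\<in>S. \<theta> + a \<notin> R" and "a \<in> S"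
  shows "0 \<le> \<theta> \<bullet> a"
  using pos_root_add_simple_if_inner_neg assms by force

text \<open>Descend from \<open>\<beta>'\<close> by simple roots, staying coordinatewise above \<open>\<beta>\<close>, until either \<open>\<beta>\<close>
  is reached or \<open>\<beta>\<close> itself has an obtuse angle with the simple root in question.\<close>

lemma pos_root_add_simple_if_below:
  assumes \<beta>: "\<beta> \<in> pos_roots R S" and \<beta>'R: "\<beta>' \<in> R"
    and below: "\<forall>a\<in>S. coord \<beta> a \<le> coord \<beta>' a" and "\<beta>' \<noteq> \<beta>"
  shows "\<exists>a\<in>S. \<beta> + a \<in> R"
proof -
  have above_pos: "\<gamma> \<in> pos_roots R S"
    if "\<gamma> \<in> R" "\<forall>a\<in>S. coord \<beta> a \<le> coord \<gamma> a" for \<gamma>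
    using that \<beta> by (auto simp: pos_roots_iff intro: order_trans)
  show ?thesis
    using above_pos[OF \<beta>'R below] below \<open>\<beta>' \<noteq> \<beta>\<close>
  proof (induction \<beta>' rule: pos_root_induct)
    case (less \<beta>')
    have \<beta>'R: "\<beta>' \<in> R" using less.hyps by (rule pos_root_root)
    have gap_nonneg: "\<forall>a\<in>S. 0 \<le> coord (\<beta>' - \<beta>) a" using less.prems(1) by (simp add: coord_diff)
    obtain a where a: "a \<in> S" and gap: "0 < coord (\<beta>' - \<beta>) a" and "0 < (\<beta>' - \<beta>) \<bullet> a"
      using exists_simple_inner_pos[OF _ gap_nonneg] less.prems(2) by auto
    show ?case
    proof (cases "\<beta> \<bullet> a < 0")
      case True
      then show ?thesis using pos_root_add_simple_if_inner_neg[OF \<beta> a] a by blast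
    next
      case False
      then have "0 < \<beta>' \<bullet> a" using \<open>0 < (\<beta>' - \<beta>) \<bullet> a\<close> by (simp add: inner_diff_left)
      have "\<beta>' \<noteq> a"
      proof
        assume "\<beta>' = a"
        then have "\<beta> = a" using pos_root_below_simple[OF \<beta> a] less.prems(1) by simp
        then show False using \<open>\<beta>' = a\<close> less.prems(2) by simp
      qed
      moreover have "\<beta>' \<noteq> - a" using less.hyps pos_root_uminus[OF simple_pos_root[OF a]] by auto
      ultimately have diff: "\<beta>' - a \<in> R"
        using root_diff_if_inner_pos[OF _ \<beta>'R] a simple_roots_subset \<open>0 < \<beta>' \<bullet> a\<close> by auto
      show ?thesis
      proof (cases "\<beta>' - a = \<beta>")
        case True
        then show ?thesis using a \<beta>'R by (metis diff_add_cancel)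
      next
        case False
        have "1 \<le> coord (\<beta>' - \<beta>) a"
          using Ints_ge_1 gap root_coord_Ints \<beta>'R pos_root_root[OF \<beta>] by (simp add: coord_diff)
        then have below': "\<forall>x\<in>S. coord \<beta> x \<le> coord (\<beta>' - a) x"
          using less.prems(1) a by (auto simp: coord_diff coord_simple)
        show ?thesis
          using less.IH[OF above_pos[OF diff below'] _ below' False] height_diff_simple[OF a]
          by simp
      qed
    qed
  qed
qed

lemma simple_not_multiple:
  assumes \<gamma>: "\<gamma> \<in> pos_roots R S" and a: "a \<in> S" and "\<gamma> + a \<in> R"
  shows "a \<noteq> c *\<^sub>R \<gamma>"
proof
  assume "a = c *\<^sub>R \<gamma>"
  have aR: "a \<in> R" using a simple_roots_subset by blast
  then have "c \<noteq> 0" using \<open>a = c *\<^sub>R \<gamma>\<close> zero_not_root by auto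
  then have "\<gamma> = (1 / c) *\<^sub>R a" using \<open>a = c *\<^sub>R \<gamma>\<close> by simp
  then have "\<gamma> = a \<or> \<gamma> = - a" using root_multiple[OF aR] pos_root_root[OF \<gamma>] by fastforce
  then show False
  proof
    assume "\<gamma> = a"
    then have "2 *\<^sub>R a \<in> R" using \<open>\<gamma> + a \<in> R\<close> by (simp add: scaleR_2)
    then show False using root_multiple[OF aR] by fastforce
  next
    assume "\<gamma> = - a"
    then show False using \<gamma> pos_root_uminus[OF simple_pos_root[OF a]] by simp
  qed
qed

lemma in_span_if_coord_vanishes:
  assumes "\<forall>b\<in>S - J. coord v b = 0" shows "v \<in> span J"
proof -
  have "coord v a *\<^sub>R a \<in> span J" if "a \<in> S" for a
    using assms that by (cases "a \<in> J") (auto intro: span_scale span_base simp: span_zero)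
  then have "(\<Sum>a\<in>S. coord v a *\<^sub>R a) \<in> span J" by (rule span_sum)
  then show ?thesis by (simp add: sum_coord)
qed

text \<open>If \<open>\<beta>\<close> lives on \<open>J\<close> and \<open>a \<bottom> J\<close>, then reflecting \<open>\<beta> + a\<close> in \<open>a\<close> gives \<open>\<beta> - a\<close>,
  which has coordinates of both signs.\<close>

lemma add_simple_not_root_if_orthogonal:
  assumes S: "J \<union> K = S" and orth: "\<forall>x\<in>J. \<forall>y\<in>K. x \<bullet> y = 0"
    and \<beta>: "\<beta> \<in> pos_roots R S" and vanish: "\<forall>b\<in>K. coord \<beta> b = 0" and a: "a \<in> K"
  shows "\<beta> + a \<notin> R"
proof
  assume "\<beta> + a \<in> R"
  have aS: "a \<in> S" and aR: "a \<in> R" using a S simple_roots_subset by auto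
  have "\<beta> \<in> span J" using vanish S by (intro in_span_if_coord_vanishes) auto
  then have "\<beta> \<bullet> a = 0" using inner_eq_0_if_orthogonal_spans[OF orth] a by (simp add: span_base)
  moreover have "a \<noteq> 0" using aR zero_not_root by blast
  ultimately have diff: "\<beta> - a \<in> R"
    using refl_vec_root[OF aR \<open>\<beta> + a \<in> R\<close>] by (simp add: refl_vec_orthogonal_add)
  obtain x where x: "x \<in> S" "coord \<beta> x \<noteq> 0"
    using zero_if_coord_zero pos_root_nonzero[OF \<beta>] by blast
  have "x \<noteq> a" using x(2) vanish a by auto
  moreover have "0 \<le> coord \<beta> x" using \<beta> x(1) by (simp add: pos_roots_iff)
  ultimately have "0 < coord (\<beta> - a) x" using x(2) aS by (simp add: coord_diff coord_simple)
  moreover have "coord (\<beta> - a) a < 0" using vanish a aS by (simp add: coord_diff coord_simple)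
  moreover have "0 \<le> coord (\<beta> - a) a \<or> coord (\<beta> - a) x \<le> 0"
    using root_coord_sign[OF diff] x(1) aS by blast
  ultimately show False by linarith
qed

lemma pos_root_in_one_part:
  assumes S: "J \<union> K = S" "J \<inter> K = {}" and orth: "\<forall>x\<in>J. \<forall>y\<in>K. x \<bullet> y = 0"
    and \<beta>: "\<beta> \<in> pos_roots R S"
  shows "(\<forall>b\<in>K. coord \<beta> b = 0) \<or> (\<forall>b\<in>J. coord \<beta> b = 0)"
  using \<beta>
proof (induction \<beta> rule: pos_root_induct)
  case (less \<beta>)
  show ?case
  proof (cases "\<beta> \<in> S")
    case True
    then have "coord \<beta> b = 0" if "b \<in> S - {\<beta>}" for b using that by (simp add: coord_simple)
    then show ?thesis using True S by blast
  next
    case False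
    then obtain a where a: "a \<in> S" and \<beta>a: "\<beta> - a \<in> pos_roots R S"
      using pos_root_diff_simple[OF less.hyps] by blast
    have lower: "\<forall>b\<in>K'. coord \<beta> b = 0"
      if "J' \<union> K' = S" "\<forall>x\<in>J'. \<forall>y\<in>K'. x \<bullet> y = 0" "\<forall>b\<in>K'. coord (\<beta> - a) b = 0" for J' K'
    proof -
      have "a \<notin> K'"
      proof
        assume "a \<in> K'"
        then have "\<beta> - a + a \<notin> R"
          using add_simple_not_root_if_orthogonal[OF that(1,2) \<beta>a that(3)] by blast
        then show False using pos_root_root[OF less.hyps] by simp
      qed
      then show ?thesis using that(3) a by (auto simp: coord_diff coord_simple)
    qed
    have S': "K \<union> J = S" using S(1) by blast
    have orth': "\<forall>x\<in>K. \<forall>y\<in>J. x \<bullet> y = 0" using orth by (metis inner_commute)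
    from less.IH[OF \<beta>a] height_diff_simple[OF a]
    have "(\<forall>b\<in>K. coord (\<beta> - a) b = 0) \<or> (\<forall>b\<in>J. coord (\<beta> - a) b = 0)" by simp
    then show ?thesis using lower[OF S(1) orth] lower[OF S' orth'] by blast
  qed
qed

lemma not_irreducible_if_orthogonal_split:
  assumes S: "J \<union> K = S" "J \<inter> K = {}" "J \<noteq> {}" "K \<noteq> {}"
    and orth: "\<forall>x\<in>J. \<forall>y\<in>K. x \<bullet> y = 0"
  shows "\<not> irreducible_rs R"
proof -
  define R1 where "R1 = {\<beta>\<in>R. \<forall>b\<in>K. coord \<beta> b = 0}"
  define R2 where "R2 = R - R1"
  have R2_vanish: "\<forall>b\<in>J. coord \<gamma> b = 0" if \<gamma>: "\<gamma> \<in> R2" for \<gamma>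
  proof -
    have \<gamma>R: "\<gamma> \<in> R" and "\<not> (\<forall>b\<in>K. coord \<gamma> b = 0)" using \<gamma> by (auto simp: R1_def R2_def)
    moreover from root_pos_or_neg[OF \<gamma>R]
    have "(\<forall>b\<in>K. coord \<gamma> b = 0) \<or> (\<forall>b\<in>J. coord \<gamma> b = 0)"
    proof
      assume "\<gamma> \<in> pos_roots R S"
      then show ?thesis by (rule pos_root_in_one_part[OF S(1,2) orth])
    next
      assume "- \<gamma> \<in> pos_roots R S"
      from pos_root_in_one_part[OF S(1,2) orth this] show ?thesis by (simp add: coord_uminus)
    qed
    ultimately show ?thesis by blast
  qed
  have "S - J \<subseteq> K" "S - K \<subseteq> J" using S(1) by blast+
  then have "\<gamma> \<in> span J" if "\<gamma> \<in> R1" for \<gamma>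
    using that by (intro in_span_if_coord_vanishes) (auto simp: R1_def)
  moreover have "\<gamma> \<in> span K" if "\<gamma> \<in> R2" for \<gamma>
    using R2_vanish[OF that] \<open>S - K \<subseteq> J\<close> by (intro in_span_if_coord_vanishes) auto
  ultimately have orth12: "\<forall>x\<in>R1. \<forall>y\<in>R2. x \<bullet> y = 0"
    using inner_eq_0_if_orthogonal_spans[OF orth] by blast
  obtain a b where a: "a \<in> J" and b: "b \<in> K" using S(3,4) by blast
  have ab: "a \<in> S" "b \<in> S" using a b S(1) by blast+
  have "b' \<noteq> a" if "b' \<in> K" for b' using that a S(2) by blast
  then have "a \<in> R1" using ab simple_roots_subset by (auto simp: R1_def coord_simple)
  moreover have "b \<in> R2" using ab b simple_roots_subset by (auto simp: R1_def R2_def coord_simple)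
  moreover have "R1 \<union> R2 = R" "R1 \<inter> R2 = {}" by (auto simp: R1_def R2_def)
  ultimately have "\<exists>R1 R2. R1 \<noteq> {} \<and> R2 \<noteq> {} \<and> R1 \<union> R2 = R \<and> R1 \<inter> R2 = {}
      \<and> (\<forall>a\<in>R1. \<forall>b\<in>R2. a \<bullet> b = 0)"
    using orth12 by (intro exI[of _ R1] exI[of _ R2] conjI) auto
  then show ?thesis unfolding irreducible_rs_def by blast
qed

text \<open>The simple roots are pairwise obtuse, so \<open>y \<bullet> \<theta>\<close> is a sum of nonpositive terms when
  \<open>y\<close> lies outside the support of \<open>\<theta>\<close>; dominance forces all of them to vanish.\<close>

lemma dominant_support_orthogonal:
  assumes nonneg: "\<forall>z\<in>S. 0 \<le> coord \<theta> z" and dom: "0 \<le> \<theta> \<bullet> y"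
    and y: "y \<in> S" "coord \<theta> y = 0" and x: "x \<in> S" "0 < coord \<theta> x"
  shows "x \<bullet> y = 0"
proof -
  have terms_nonneg: "0 \<le> - (coord \<theta> z * (y \<bullet> z))" if z: "z \<in> S" for z
  proof (cases "z = y")
    case False
    then have "y \<bullet> z \<le> 0" using simple_inner_nonpos y z by blast
    then show ?thesis using nonneg z by (simp add: mult_nonneg_nonpos)
  qed (simp add: y)
  let ?t = "\<lambda>z. - (coord \<theta> z * (y \<bullet> z))"
  have "sum ?t S \<le> 0"
    using dom inner_coord_expansion[of y \<theta>] by (simp add: sum_negf inner_commute)
  moreover have "0 \<le> sum ?t S" using terms_nonneg by (rule sum_nonneg)
  ultimately have "\<forall>z\<in>S. ?t z = 0"
    using sum_nonneg_eq_0_iff[OF finite_simple_roots, of ?t] terms_nonneg by simp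
  then have "?t x = 0" using x(1) by blast
  then show ?thesis using x(2) by (simp add: inner_commute)
qed

lemma maximal_root_coord_pos:
  assumes irr: "irreducible_rs R" and \<theta>: "\<theta> \<in> pos_roots R S" and max: "\<forall>a\<in>S. \<theta> + a \<notin> R"
    and a: "a \<in> S"
  shows "0 < coord \<theta> a"
proof (rule ccontr)
  assume "\<not> 0 < coord \<theta> a"
  define J where "J = {a\<in>S. 0 < coord \<theta> a}"
  define K where "K = S - J"
  have nonneg: "\<forall>x\<in>S. 0 \<le> coord \<theta> x" using \<theta> by (simp add: pos_roots_iff)
  have K_vanish: "coord \<theta> y = 0" if "y \<in> K" for y
  proof -
    have "y \<in> S" "\<not> 0 < coord \<theta> y" using that by (auto simp: K_def J_def)
    then show ?thesis using nonneg by fastforce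
  qed
  have "J \<noteq> {}"
  proof
    assume "J = {}"
    then have "coord \<theta> y = 0" if "y \<in> S" for y using that K_vanish by (simp add: K_def)
    then show False using zero_if_coord_zero pos_root_nonzero[OF \<theta>] by blast
  qed
  moreover have "K \<noteq> {}" using a \<open>\<not> 0 < coord \<theta> a\<close> by (auto simp: K_def J_def)
  moreover have "\<forall>x\<in>J. \<forall>y\<in>K. x \<bullet> y = 0"
  proof (intro ballI)
    fix x y assume "x \<in> J" "y \<in> K"
    then show "x \<bullet> y = 0"
      using dominant_support_orthogonal[OF nonneg] maximal_root_dominant[OF \<theta> max] K_vanish
      unfolding J_def K_def by blast
  qed
  moreover have "J \<union> K = S" "J \<inter> K = {}" by (auto simp: K_def J_def)
  ultimately show False using not_irreducible_if_orthogonal_split irr by blast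
qed

lemma maximal_root_unique:
  assumes irr: "irreducible_rs R"
    and \<theta>: "\<theta> \<in> pos_roots R S" and max: "\<forall>a\<in>S. \<theta> + a \<notin> R"
    and \<theta>': "\<theta>' \<in> pos_roots R S" and max': "\<forall>a\<in>S. \<theta>' + a \<notin> R"
  shows "\<theta>' = \<theta>"
proof (rule ccontr)
  assume "\<theta>' \<noteq> \<theta>"
  have \<theta>R: "\<theta> \<in> R" and \<theta>'R: "\<theta>' \<in> R" using \<theta> \<theta>' pos_root_root by auto
  obtain a where a: "a \<in> S" and "0 < \<theta> \<bullet> a"
    using exists_simple_inner_pos[OF pos_root_nonzero[OF \<theta>]] \<theta> by (auto simp: pos_roots_iff)
  have "0 < coord \<theta>' x" "0 \<le> \<theta> \<bullet> x" if "x \<in> S" for x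
    using maximal_root_coord_pos[OF irr \<theta>' max' that] maximal_root_dominant[OF \<theta> max that] .
  then have "0 < (\<Sum>x\<in>S. coord \<theta>' x * (\<theta> \<bullet> x))"
    using \<open>0 < \<theta> \<bullet> a\<close> a by (intro sum_pos2[OF finite_simple_roots a]) (simp_all add: less_imp_le)
  then have "0 < \<theta> \<bullet> \<theta>'" by (simp only: inner_coord_expansion[of \<theta> \<theta>'])
  moreover have "\<theta> \<noteq> - \<theta>'" using pos_root_uminus[OF \<theta>'] \<theta> by blast
  ultimately have "\<theta> - \<theta>' \<in> R"
    using \<open>\<theta>' \<noteq> \<theta>\<close> by (intro root_diff_if_inner_pos[OF \<theta>'R \<theta>R]) auto
  from root_pos_or_neg[OF this] show False
  proof
    assume "\<theta> - \<theta>' \<in> pos_roots R S"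
    then have "\<forall>x\<in>S. coord \<theta>' x \<le> coord \<theta> x" by (simp add: pos_roots_iff coord_diff)
    then show False using pos_root_add_simple_if_below[OF \<theta>' \<theta>R] \<open>\<theta>' \<noteq> \<theta>\<close> max' by blast
  next
    assume "- (\<theta> - \<theta>') \<in> pos_roots R S"
    then have "\<forall>x\<in>S. coord \<theta> x \<le> coord \<theta>' x" by (simp add: pos_roots_iff coord_diff coord_uminus)
    then show False using pos_root_add_simple_if_below[OF \<theta> \<theta>'R] \<open>\<theta>' \<noteq> \<theta>\<close> max by blast
  qed
qed

lemma highest_root_eqI:
  assumes "irreducible_rs R" and "\<alpha> \<in> pos_roots R S" and "\<forall>a\<in>S. \<alpha> + a \<notin> R"
  shows "highest_root R S = \<alpha>"
  unfolding highest_root_def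
  by (rule the_equality) (use assms maximal_root_unique[OF assms] in blast)+

end

section \<open>Minimal pairs for balanced convex preorders\<close>

locale balanced_convex_preorder = based_root_system R S for R S :: "'a::euclidean_space set" +
  fixes le :: "'a \<times> int \<Rightarrow> 'a \<times> int \<Rightarrow> bool"
  assumes convex: "convex_preorder R S le" and balanced: "balanced R S le"
begin

abbreviation "Pos \<equiv> aff_pos_roots R S"
abbreviation "RePos \<equiv> real_pos_roots R S"
abbreviation "splits \<equiv> split_pair R S le"

lemma le_trans: "x \<in> Pos \<Longrightarrow> y \<in> Pos \<Longrightarrow> z \<in> Pos \<Longrightarrow> le x y \<Longrightarrow> le y z \<Longrightarrow> le x z"
  and le_total: "x \<in> Pos \<Longrightarrow> y \<in> Pos \<Longrightarrow> le x y \<or> le y x"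
  and le_antisym_iff: "x \<in> Pos \<Longrightarrow> y \<in> Pos \<Longrightarrow> le x y \<and> le y x \<longleftrightarrow> proportional x y"
  using convex unfolding convex_preorder_def Let_def by blast+

lemma strictly_le_trans:
  "x \<in> Pos \<Longrightarrow> y \<in> Pos \<Longrightarrow> z \<in> Pos \<Longrightarrow> strictly le x y \<Longrightarrow> le y z \<Longrightarrow> strictly le x z"
  "x \<in> Pos \<Longrightarrow> y \<in> Pos \<Longrightarrow> z \<in> Pos \<Longrightarrow> le x y \<Longrightarrow> strictly le y z \<Longrightarrow> strictly le x z"
  unfolding strictly_def by (meson le_trans)+

lemma real_pos_rootI:
  "\<beta> \<in> pos_roots R S \<Longrightarrow> 0 \<le> n \<Longrightarrow> (\<beta>, n) \<in> RePos"
  "\<beta> \<in> pos_roots R S \<Longrightarrow> 0 < n \<Longrightarrow> (- \<beta>, n) \<in> RePos"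
  unfolding real_pos_roots_def by blast+

lemma real_pos_root_pos: "x \<in> RePos \<Longrightarrow> x \<in> Pos"
  unfolding aff_pos_roots_def by blast

lemma imaginary_pos: "0 < n \<Longrightarrow> (0, n) \<in> Pos"
  unfolding aff_pos_roots_def by blast

lemma null_root_pos: "null_root \<in> Pos"
  unfolding null_root_def by (simp add: imaginary_pos)

lemma aff_pos_rootE:
  assumes "x \<in> Pos"
  obtains (plus) \<beta> n where "\<beta> \<in> pos_roots R S" "0 \<le> n" "x = (\<beta>, n)"
    | (minus) \<beta> n where "\<beta> \<in> pos_roots R S" "0 < n" "x = (- \<beta>, n)"
    | (imaginary) n where "0 < n" "x = (0, n)"
  using assms unfolding aff_pos_roots_def real_pos_roots_def by blast

lemma real_pos_rootE:
  assumes "x \<in> RePos"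
  obtains (plus) \<beta> n where "\<beta> \<in> pos_roots R S" "0 \<le> n" "x = (\<beta>, n)"
    | (minus) \<beta> n where "\<beta> \<in> pos_roots R S" "0 < n" "x = (- \<beta>, n)"
  using assms unfolding real_pos_roots_def by blast

lemma aff_pos_root_real_or_imaginary: "x \<in> Pos \<Longrightarrow> x \<in> RePos \<or> (\<exists>n>0. x = (0, n))"
  unfolding aff_pos_roots_def by blast

lemma aff_pos_root_level_nonneg: "x \<in> Pos \<Longrightarrow> 0 \<le> snd x"
  by (erule aff_pos_rootE) auto

lemma aff_pos_root_nonzero: "x \<in> Pos \<Longrightarrow> x \<noteq> (0, 0)"
  by (erule aff_pos_rootE) (auto dest: pos_root_nonzero)

lemma neg_level_zero_not_pos: "\<alpha> \<in> pos_roots R S \<Longrightarrow> (- \<alpha>, 0) \<notin> Pos"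
  by (auto elim!: aff_pos_rootE dest: pos_root_uminus)

lemma imaginary_equiv_null_root: "0 < n \<Longrightarrow> le (0, n) null_root \<and> le null_root (0, n)"
proof -
  assume "0 < n"
  then have "proportional (0, n) null_root"
    unfolding proportional_def null_root_def by (intro exI[of _ "1 / real_of_int n"]) simp
  then show ?thesis using le_antisym_iff imaginary_pos[OF \<open>0 < n\<close>] null_root_pos by blast
qed

lemma null_root_less: "\<beta> \<in> pos_roots R S \<Longrightarrow> 0 \<le> n \<Longrightarrow> strictly le null_root (\<beta>, n)"
  using balanced unfolding balanced_def by blast

lemma less_null_root:
  assumes \<beta>: "\<beta> \<in> pos_roots R S" and "0 < n"
  shows "strictly le (- \<beta>, n) null_root"
proof -
  have x: "(- \<beta>, n) \<in> Pos" using real_pos_rootI(2)[OF assms] by (rule real_pos_root_pos)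
  have "(- \<beta>, n) \<notin> {(\<beta>, n) | \<beta> n. \<beta> \<in> pos_roots R S \<and> 0 \<le> n}"
    using pos_root_uminus[OF \<beta>] by auto
  then have "\<not> strictly le null_root (- \<beta>, n)"
    using balanced real_pos_rootI(2)[OF assms] unfolding balanced_def by blast
  moreover have "\<not> proportional null_root (- \<beta>, n)"
    using pos_root_nonzero[OF \<beta>] unfolding proportional_def null_root_def by auto
  ultimately show ?thesis
    using le_total[OF x null_root_pos] le_antisym_iff[OF null_root_pos x]
    unfolding strictly_def by blast
qed

lemma real_if_above_null_root: "x \<in> Pos \<Longrightarrow> strictly le null_root x \<Longrightarrow> x \<in> RePos"
  using aff_pos_root_real_or_imaginary imaginary_equiv_null_root unfolding strictly_def by blast

lemma real_if_below_null_root: "x \<in> Pos \<Longrightarrow> strictly le x null_root \<Longrightarrow> x \<in> RePos"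
  using aff_pos_root_real_or_imaginary imaginary_equiv_null_root unfolding strictly_def by blast

lemma split_pair_pos: "splits \<rho> \<beta> \<gamma> \<Longrightarrow> \<beta> \<in> Pos \<and> \<gamma> \<in> Pos"
  unfolding split_pair_def by blast

lemma finite_split_pairs: "finite {(\<beta>, \<gamma>). splits \<rho> \<beta> \<gamma>}"
proof -
  let ?complement = "\<lambda>\<beta>. (\<beta>, (fst \<rho> - fst \<beta>, snd \<rho> - snd \<beta>))"
  have "{(\<beta>, \<gamma>). splits \<rho> \<beta> \<gamma>} \<subseteq> ?complement ` (insert 0 R \<times> {0..snd \<rho>})"
  proof clarify
    fix \<beta> \<gamma> assume s: "splits \<rho> \<beta> \<gamma>"
    then have \<beta>: "\<beta> \<in> Pos" and \<gamma>: "\<gamma> \<in> Pos" by (auto dest: split_pair_pos)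
    have sum: "fst \<beta> + fst \<gamma> = fst \<rho>" "snd \<beta> + snd \<gamma> = snd \<rho>"
      using s unfolding split_pair_def aff_add_def by auto
    have "fst \<beta> \<in> insert 0 R"
      using \<beta> by (cases rule: aff_pos_rootE) (auto intro: pos_root_root root_uminus)
    moreover have "snd \<beta> \<in> {0..snd \<rho>}"
      using sum aff_pos_root_level_nonneg[OF \<beta>] aff_pos_root_level_nonneg[OF \<gamma>] by auto
    moreover have "\<gamma> = (fst \<rho> - fst \<beta>, snd \<rho> - snd \<beta>)"
      using sum by (auto simp: prod_eq_iff eq_diff_eq add.commute)
    ultimately show "(\<beta>, \<gamma>) \<in> ?complement ` (insert 0 R \<times> {0..snd \<rho>})"
      by (auto intro!: image_eqI[of _ _ \<beta>] simp: mem_Times_iff)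
  qed
  then show ?thesis by (rule finite_subset) (simp add: finite_roots)
qed

text \<open>If \<open>\<beta>' = c\<beta>\<close> and \<open>\<gamma>' = d\<gamma>\<close> with \<open>c \<noteq> 1\<close>, comparing \<open>\<beta> + \<gamma> = \<beta>' + \<gamma>'\<close> makes \<open>\<beta>\<close> and \<open>\<gamma>\<close>
  proportional, contradicting \<open>\<gamma> \<prec> \<beta>\<close>.\<close>

lemma split_pair_eq_if_proportional:
  assumes s: "splits \<rho> \<beta> \<gamma>" and s': "splits \<rho> \<beta>' \<gamma>'"
    and "proportional \<beta> \<beta>'" and "proportional \<gamma> \<gamma>'"
  shows "\<beta>' = \<beta> \<and> \<gamma>' = \<gamma>"
proof -
  obtain c where c: "c \<noteq> 0" "fst \<beta>' = c *\<^sub>R fst \<beta>"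
      "real_of_int (snd \<beta>') = c * real_of_int (snd \<beta>)"
    using \<open>proportional \<beta> \<beta>'\<close> unfolding proportional_def by blast
  obtain d where d: "fst \<gamma>' = d *\<^sub>R fst \<gamma>" "real_of_int (snd \<gamma>') = d * real_of_int (snd \<gamma>)"
    using \<open>proportional \<gamma> \<gamma>'\<close> unfolding proportional_def by blast
  have fst_sum: "fst \<beta> + fst \<gamma> = fst \<beta>' + fst \<gamma>'" and snd_sum: "snd \<beta> + snd \<gamma> = snd \<beta>' + snd \<gamma>'"
    using s s' unfolding split_pair_def aff_add_def by (auto simp: prod_eq_iff)
  show ?thesis
  proof (cases "c = 1")
    case True
    then show ?thesis using c fst_sum snd_sum by (auto simp: prod_eq_iff)
  next
    case False
    define k where "k = (d - 1) / (1 - c)"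
    have "(1 - c) *\<^sub>R fst \<beta> = (d - 1) *\<^sub>R fst \<gamma>"
      using fst_sum c(2) d(1) by (simp add: algebra_simps)
    then have "(1 / (1 - c)) *\<^sub>R ((1 - c) *\<^sub>R fst \<beta>) = (1 / (1 - c)) *\<^sub>R ((d - 1) *\<^sub>R fst \<gamma>)"
      by simp
    then have fst_\<beta>: "fst \<beta> = k *\<^sub>R fst \<gamma>" using False unfolding k_def by simp
    have "(1 - c) * real_of_int (snd \<beta>) = (d - 1) * real_of_int (snd \<gamma>)"
      using arg_cong[OF snd_sum, of real_of_int] c(3) d(2) by (simp add: algebra_simps)
    then have snd_\<beta>: "real_of_int (snd \<beta>) = k * real_of_int (snd \<gamma>)"
      using False unfolding k_def by (simp add: field_simps)
    have \<beta>: "\<beta> \<in> Pos" and \<gamma>: "\<gamma> \<in> Pos" using split_pair_pos[OF s] by auto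
    have "k \<noteq> 0" using fst_\<beta> snd_\<beta> aff_pos_root_nonzero[OF \<beta>] by (auto simp: prod_eq_iff)
    then have "proportional \<gamma> \<beta>" unfolding proportional_def using fst_\<beta> snd_\<beta> by blast
    then have "le \<beta> \<gamma>" using le_antisym_iff[OF \<gamma> \<beta>] by blast
    then show ?thesis using s unfolding split_pair_def strictly_def by blast
  qed
qed

lemma minimal_pairI:
  assumes s: "splits \<rho> \<beta> \<gamma>"
    and extremal: "\<And>\<beta>' \<gamma>'. splits \<rho> \<beta>' \<gamma>' \<Longrightarrow> le \<beta>' \<beta> \<Longrightarrow> le \<gamma> \<gamma>' \<Longrightarrow> le \<beta> \<beta>' \<and> le \<gamma>' \<gamma>"
  shows "minimal_pair R S le \<rho> \<beta> \<gamma>"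
  unfolding minimal_pair_def
proof (intro conjI s allI impI)
  fix \<beta>' \<gamma>' assume "splits \<rho> \<beta>' \<gamma>' \<and> (\<beta>', \<gamma>') \<noteq> (\<beta>, \<gamma>)"
  then have s': "splits \<rho> \<beta>' \<gamma>'" and ne: "(\<beta>', \<gamma>') \<noteq> (\<beta>, \<gamma>)" by auto
  have pos: "\<beta> \<in> Pos" "\<gamma> \<in> Pos" "\<beta>' \<in> Pos" "\<gamma>' \<in> Pos" using split_pair_pos s s' by auto
  show "strictly le \<beta> \<beta>' \<or> strictly le \<gamma>' \<gamma>"
  proof (rule ccontr)
    assume "\<not> ?thesis"
    then have "le \<beta>' \<beta>" "le \<gamma> \<gamma>'"
      unfolding strictly_def using le_total pos by blast+
    with extremal[OF s'] have "proportional \<beta> \<beta>'" "proportional \<gamma> \<gamma>'"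
      using le_antisym_iff pos by blast+
    then show False using split_pair_eq_if_proportional[OF s s'] ne by auto
  qed
qed

lemma exists_minimal_pair_above:
  assumes "splits \<rho> \<beta>0 \<gamma>0"
  shows "\<exists>\<beta> \<gamma>. minimal_pair R S le \<rho> \<beta> \<gamma> \<and> le \<gamma>0 \<gamma>"
proof -
  let ?A = "{(\<beta>, \<gamma>). splits \<rho> \<beta> \<gamma>}"
  have sub: "fst ` ?A \<subseteq> Pos" "snd ` ?A \<subseteq> Pos" by (auto dest!: split_pair_pos)
  have ne: "?A \<noteq> {}" using assms by blast
  have "\<exists>m\<in>?A. (\<forall>x\<in>?A. le (snd x) (snd m)) \<and> (\<forall>x\<in>?A. le (snd m) (snd x) \<longrightarrow> le (fst m) (fst x))"
    by (rule finite_lex_max_min[OF finite_split_pairs ne sub(2,1)]) (fact le_total, fact le_trans)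
  then obtain m where m: "m \<in> ?A" "\<forall>x\<in>?A. le (snd x) (snd m)"
      "\<forall>x\<in>?A. le (snd m) (snd x) \<longrightarrow> le (fst m) (fst x)"
    by blast
  obtain \<beta> \<gamma> where m_eq: "m = (\<beta>, \<gamma>)" by (cases m)
  have max: "le \<gamma>' \<gamma>" and min: "le \<gamma> \<gamma>' \<Longrightarrow> le \<beta> \<beta>'" if "splits \<rho> \<beta>' \<gamma>'" for \<beta>' \<gamma>'
    using bspec[OF m(2), of "(\<beta>', \<gamma>')"] bspec[OF m(3), of "(\<beta>', \<gamma>')"] that m_eq by auto
  have "minimal_pair R S le \<rho> \<beta> \<gamma>"
    using m(1) m_eq by (intro minimal_pairI) (auto intro: max min)
  then show ?thesis using max[OF assms] by blast
qed

lemma exists_minimal_pair_below: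
  assumes "splits \<rho> \<beta>0 \<gamma>0"
  shows "\<exists>\<beta> \<gamma>. minimal_pair R S le \<rho> \<beta> \<gamma> \<and> le \<beta> \<beta>0"
proof -
  let ?A = "{(\<beta>, \<gamma>). splits \<rho> \<beta> \<gamma>}"
  have ge_total: "le y x \<or> le x y" if "x \<in> Pos" "y \<in> Pos" for x y
    using le_total[OF that] by blast
  have ge_trans: "le z x" if "x \<in> Pos" "y \<in> Pos" "z \<in> Pos" "le y x" "le z y" for x y z
    using le_trans[OF that(3,2,1) that(5,4)] .
  have sub: "fst ` ?A \<subseteq> Pos" "snd ` ?A \<subseteq> Pos" by (auto dest!: split_pair_pos)
  have ne: "?A \<noteq> {}" using assms by blast
  have "\<exists>m\<in>?A. (\<forall>x\<in>?A. le (fst m) (fst x)) \<and> (\<forall>x\<in>?A. le (fst x) (fst m) \<longrightarrow> le (snd x) (snd m))"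
    by (rule finite_lex_max_min[OF finite_split_pairs ne sub, where r = "\<lambda>x y. le y x"])
      (fact ge_total, fact ge_trans)
  then obtain m where m: "m \<in> ?A" "\<forall>x\<in>?A. le (fst m) (fst x)"
      "\<forall>x\<in>?A. le (fst x) (fst m) \<longrightarrow> le (snd x) (snd m)"
    by blast
  obtain \<beta> \<gamma> where m_eq: "m = (\<beta>, \<gamma>)" by (cases m)
  have min: "le \<beta> \<beta>'" and max: "le \<beta>' \<beta> \<Longrightarrow> le \<gamma>' \<gamma>" if "splits \<rho> \<beta>' \<gamma>'" for \<beta>' \<gamma>'
    using bspec[OF m(2), of "(\<beta>', \<gamma>')"] bspec[OF m(3), of "(\<beta>', \<gamma>')"] that m_eq by auto
  have "minimal_pair R S le \<rho> \<beta> \<gamma>"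
    using m(1) m_eq by (intro minimal_pairI) (auto intro: max min)
  then show ?thesis using min[OF assms] by blast
qed

lemma split_pair_if_not_proportional:
  assumes "x \<in> Pos" "y \<in> Pos" "aff_add x y = \<rho>" "\<not> proportional x y"
  shows "splits \<rho> x y \<or> splits \<rho> y x"
proof -
  have "aff_add y x = \<rho>" using assms(3) by (simp add: aff_add_def add.commute)
  then show ?thesis
    using assms le_total le_antisym_iff unfolding split_pair_def strictly_def by blast
qed

lemma split_pair_real_if_above:
  assumes s: "splits \<rho> \<beta> \<gamma>" and "strictly le null_root \<gamma>"
  shows "\<beta> \<in> RePos \<and> \<gamma> \<in> RePos"
proof -
  have pos: "\<beta> \<in> Pos" "\<gamma> \<in> Pos" using split_pair_pos[OF s] by auto
  have "le \<gamma> \<beta>" using s unfolding split_pair_def strictly_def by blast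
  then have "strictly le null_root \<beta>"
    using strictly_le_trans(1)[OF null_root_pos pos(2,1) \<open>strictly le null_root \<gamma>\<close>] by blast
  then show ?thesis using real_if_above_null_root pos \<open>strictly le null_root \<gamma>\<close> by blast
qed

lemma split_pair_real_if_below:
  assumes s: "splits \<rho> \<beta> \<gamma>" and "strictly le \<beta> null_root"
  shows "\<beta> \<in> RePos \<and> \<gamma> \<in> RePos"
proof -
  have pos: "\<beta> \<in> Pos" "\<gamma> \<in> Pos" using split_pair_pos[OF s] by auto
  have "le \<gamma> \<beta>" using s unfolding split_pair_def strictly_def by blast
  then have "strictly le \<gamma> null_root"
    using strictly_le_trans(2)[OF pos(2,1) null_root_pos _ \<open>strictly le \<beta> null_root\<close>] by blast
  then show ?thesis using real_if_below_null_root pos \<open>strictly le \<beta> null_root\<close> by blast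
qed

text \<open>Above the null root every split pair is real, and passing to a minimal pair only moves
  the smaller root up; dually below the null root.\<close>

lemma real_minimal_pair_if_split_above:
  assumes "splits \<rho> \<beta>0 \<gamma>0" and "strictly le null_root \<gamma>0"
  shows "\<exists>\<beta> \<gamma>. minimal_pair R S le \<rho> \<beta> \<gamma> \<and> \<beta> \<in> RePos \<and> \<gamma> \<in> RePos"
proof -
  obtain \<beta> \<gamma> where mp: "minimal_pair R S le \<rho> \<beta> \<gamma>" and "le \<gamma>0 \<gamma>"
    using exists_minimal_pair_above[OF assms(1)] by blast
  have s: "splits \<rho> \<beta> \<gamma>" using mp unfolding minimal_pair_def by blast
  have "strictly le null_root \<gamma>"
    using strictly_le_trans(1)[OF null_root_pos _ _ assms(2) \<open>le \<gamma>0 \<gamma>\<close>]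
      split_pair_pos[OF assms(1)] split_pair_pos[OF s] by blast
  then show ?thesis using split_pair_real_if_above[OF s] mp by blast
qed

lemma real_minimal_pair_if_split_below:
  assumes "splits \<rho> \<beta>0 \<gamma>0" and "strictly le \<beta>0 null_root"
  shows "\<exists>\<beta> \<gamma>. minimal_pair R S le \<rho> \<beta> \<gamma> \<and> \<beta> \<in> RePos \<and> \<gamma> \<in> RePos"
proof -
  obtain \<beta> \<gamma> where mp: "minimal_pair R S le \<rho> \<beta> \<gamma>" and "le \<beta> \<beta>0"
    using exists_minimal_pair_below[OF assms(1)] by blast
  have s: "splits \<rho> \<beta> \<gamma>" using mp unfolding minimal_pair_def by blast
  have "strictly le \<beta> null_root"
    using strictly_le_trans(2)[OF _ _ null_root_pos \<open>le \<beta> \<beta>0\<close> assms(2)]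
      split_pair_pos[OF assms(1)] split_pair_pos[OF s] by blast
  then show ?thesis using split_pair_real_if_below[OF s] mp by blast
qed

lemma real_minimal_pair_plus:
  assumes \<alpha>: "\<alpha> \<in> pos_roots R S" and "\<alpha> \<notin> S" and "0 \<le> n"
  shows "\<exists>\<beta> \<gamma>. minimal_pair R S le (\<alpha>, n) \<beta> \<gamma> \<and> \<beta> \<in> RePos \<and> \<gamma> \<in> RePos"
proof -
  obtain a where a: "a \<in> S" and \<alpha>a: "\<alpha> - a \<in> pos_roots R S"
    using pos_root_diff_simple[OF assms(1,2)] by blast
  let ?x = "(\<alpha> - a, n)" and ?y = "(a, 0::int)"
  have "\<not> proportional ?x ?y"
    using simple_not_multiple[OF \<alpha>a a] pos_root_root[OF \<alpha>] unfolding proportional_def by auto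
  moreover have "aff_add ?x ?y = (\<alpha>, n)" by (simp add: aff_add_def)
  ultimately have "splits (\<alpha>, n) ?x ?y \<or> splits (\<alpha>, n) ?y ?x"
    using split_pair_if_not_proportional real_pos_root_pos
      real_pos_rootI(1)[OF \<alpha>a \<open>0 \<le> n\<close>] real_pos_rootI(1)[OF simple_pos_root[OF a], of 0]
    by simp
  moreover have "strictly le null_root ?x" "strictly le null_root ?y"
    using null_root_less \<alpha>a simple_pos_root[OF a] \<open>0 \<le> n\<close> by auto
  ultimately show ?thesis using real_minimal_pair_if_split_above by blast
qed

lemma real_minimal_pair_minus:
  assumes \<alpha>: "\<alpha> \<in> pos_roots R S" and "\<alpha> \<notin> S" and "2 \<le> n"
  shows "\<exists>\<beta> \<gamma>. minimal_pair R S le (- \<alpha>, n) \<beta> \<gamma> \<and> \<beta> \<in> RePos \<and> \<gamma> \<in> RePos"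
proof -
  obtain a where a: "a \<in> S" and \<alpha>a: "\<alpha> - a \<in> pos_roots R S"
    using pos_root_diff_simple[OF assms(1,2)] by blast
  let ?x = "(- (\<alpha> - a), n - 1)" and ?y = "(- a, 1::int)"
  have "\<not> proportional ?x ?y"
  proof
    assume "proportional ?x ?y"
    then obtain c where "- a = c *\<^sub>R (a - \<alpha>)" unfolding proportional_def by auto
    then have "a = c *\<^sub>R (\<alpha> - a)" by (metis minus_diff_eq minus_minus scaleR_minus_right)
    then show False using simple_not_multiple[OF \<alpha>a a] pos_root_root[OF \<alpha>] by simp
  qed
  moreover have "aff_add ?x ?y = (- \<alpha>, n)" by (simp add: aff_add_def)
  moreover have "?x \<in> Pos" "?y \<in> Pos"
    using real_pos_root_pos real_pos_rootI(2)[OF \<alpha>a, of "n - 1"]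
      real_pos_rootI(2)[OF simple_pos_root[OF a], of 1] \<open>2 \<le> n\<close> by auto
  ultimately have "splits (- \<alpha>, n) ?x ?y \<or> splits (- \<alpha>, n) ?y ?x"
    using split_pair_if_not_proportional by blast
  moreover have "strictly le ?x null_root" "strictly le ?y null_root"
    using less_null_root[OF \<alpha>a, of "n - 1"] less_null_root[OF simple_pos_root[OF a], of 1]
      \<open>2 \<le> n\<close> by auto
  ultimately show ?thesis using real_minimal_pair_if_split_below by blast
qed

lemma split_pair_level_one_real:
  assumes \<alpha>: "\<alpha> \<in> pos_roots R S" and s: "splits (- \<alpha>, 1) \<beta> \<gamma>"
  shows "\<beta> \<in> RePos \<and> \<gamma> \<in> RePos"
proof -
  have real: "y \<in> RePos" if "x \<in> Pos" "y \<in> Pos" "aff_add x y = (- \<alpha>, 1)" for x y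
  proof -
    have "x \<noteq> (- \<alpha>, 0)" using neg_level_zero_not_pos[OF \<alpha>] that(1) by blast
    then have "\<not> (\<exists>k>0. y = (0, k))"
      using that(3) aff_pos_root_level_nonneg[OF that(1)] by (auto simp: aff_add_def prod_eq_iff)
    then show ?thesis using aff_pos_root_real_or_imaginary[OF that(2)] by blast
  qed
  have "aff_add \<beta> \<gamma> = (- \<alpha>, 1)" "aff_add \<gamma> \<beta> = (- \<alpha>, 1)"
    using s unfolding split_pair_def aff_add_def by (auto simp: add.commute)
  then show ?thesis using real split_pair_pos[OF s] by blast
qed

lemma real_minimal_pair_level_one:
  assumes irr: "irreducible_rs R" and \<alpha>: "\<alpha> \<in> pos_roots R S" and "\<alpha> \<noteq> highest_root R S"
  shows "\<exists>\<beta> \<gamma>. minimal_pair R S le (- \<alpha>, 1) \<beta> \<gamma> \<and> \<beta> \<in> RePos \<and> \<gamma> \<in> RePos"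
proof -
  obtain a where a: "a \<in> S" and "\<alpha> + a \<in> R"
    using highest_root_eqI[OF irr \<alpha>] \<open>\<alpha> \<noteq> highest_root R S\<close> by auto
  then have \<alpha>a: "\<alpha> + a \<in> pos_roots R S"
    using \<alpha> simple_pos_root[OF a] by (auto simp: pos_roots_iff coord_add)
  let ?x = "(a, 0::int)" and ?y = "(- (\<alpha> + a), 1::int)"
  have "\<not> proportional ?x ?y" unfolding proportional_def by auto
  moreover have "aff_add ?x ?y = (- \<alpha>, 1)" by (simp add: aff_add_def)
  moreover have "?x \<in> Pos" "?y \<in> Pos"
    using real_pos_root_pos real_pos_rootI(1)[OF simple_pos_root[OF a], of 0]
      real_pos_rootI(2)[OF \<alpha>a, of 1] by auto
  ultimately have "splits (- \<alpha>, 1) ?x ?y \<or> splits (- \<alpha>, 1) ?y ?x"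
    using split_pair_if_not_proportional by blast
  then obtain \<beta> \<gamma> where mp: "minimal_pair R S le (- \<alpha>, 1) \<beta> \<gamma>"
    using exists_minimal_pair_above by blast
  then have "splits (- \<alpha>, 1) \<beta> \<gamma>" unfolding minimal_pair_def by blast
  then show ?thesis using mp split_pair_level_one_real[OF \<alpha>] by blast
qed

end

theorem lemma6p9:
  fixes R S :: "'a::euclidean_space set"
    and le :: "'a \<times> int \<Rightarrow> 'a \<times> int \<Rightarrow> bool"
    and \<rho> :: "'a \<times> int"
  assumes "root_system R" and "irreducible_rs R" and "is_base R S"
    and "convex_preorder R S le" and "balanced R S le"
    and "\<rho> \<in> real_pos_roots R S" and "\<rho> \<notin> aff_simple_roots R S"
    and "\<not> (\<exists>a\<in>S. \<exists>n::int. n > 0 \<and> (\<rho> = (a, n) \<or> \<rho> = (- a, n)))"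
  shows "\<exists>\<beta> \<gamma>. minimal_pair R S le \<rho> \<beta> \<gamma> \<and> \<beta> \<in> real_pos_roots R S \<and> \<gamma> \<in> real_pos_roots R S"
proof -
  interpret balanced_convex_preorder R S le
    by unfold_locales (fact assms)+
  from assms(6) show ?thesis
  proof (cases rule: real_pos_rootE)
    case (plus \<alpha> n)
    then have "\<alpha> \<notin> S"
      using assms(7,8) unfolding aff_simple_roots_def by (cases "n = 0") force+
    then show ?thesis using real_minimal_pair_plus plus by blast
  next
    case (minus \<alpha> n)
    show ?thesis
    proof (cases "n = 1")
      case True
      then have "\<alpha> \<noteq> highest_root R S" using assms(7) minus unfolding aff_simple_roots_def by auto
      then show ?thesis using real_minimal_pair_level_one[OF assms(2) minus(1)] minus True by simp
    next
      case False
      then have "\<alpha> \<notin> S" "2 \<le> n" using assms(8) minus by auto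
      then show ?thesis using real_minimal_pair_minus minus by blast
    qed
  qed
qed

end
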